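(* Let $u$ be a drift function, $p\in[1,\infty)$, and $\mu$ a finite non-zero $P$-invariant measure on $\mathbf X$. Then $\mathcal E^p_u(\mathbf X)\subset\mathcal L^p(\mathbf X,\mu)$ and the inclusion map is continuous.
   Context: $(X_n)$ Markov chain on a complete separable metric space $\mathbf X$, $\mathbb P_x$ its law from $x$, $Pf(x)=\mathbb E_xf(X_1)$; $\mu$ is $P$-invariant if $\int Pf\,d\mu=\int f\,d\mu$ for non-negative Borel $f$. $\tau$ is a $\theta$-compatible stopping time ($\mathbb P_x(\tau=0)=0$ and $\mathbb P_x$-a.s. $\tau\ge2\Rightarrow\tau\circ\theta=\tau-1$) with $\mathbb E_x\tau<\infty$ for all $x$; $Qf(x)=\mathbb E_x[f(X_\tau)\mathbf 1_{\tau<\infty}]$. A drift function is a Borel $u:\mathbf X\to[1,\infty)$ such that $u-Pu$ is bounded below and $Qu$, $x\mapsto\mathbb E_x\tau/u(x)$ and $P(u-Pu+B_u)/(u-Pu+B_u)$ are bounded on $\mathbf X$, where $B_u=\sup(Pu-u)+1$. For Borel $v\ge1$, $\mathcal F^p_v$ is the space of Borel $f$ with $\sup|f|^p/v<\infty$, norm $\sup|f|/v^{1/p}$; $\mathcal E^p_u:=\mathcal F^p_{u-Pu+B_u}$. *)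

theory Defs
  imports "HOL-Probability.Probability"
begin

text \<open>Path space: streams \<open>\<omega>\<close> with \<open>X n \<omega> = \<omega> !! n\<close>, \<open>X 0 = x\<close> under \<open>Px x\<close>;
  the shift \<open>\<theta>\<close> is \<open>stl\<close>.\<close>

definition markov_law ::
  "('a::polish_space \<Rightarrow> 'a measure) \<Rightarrow> ('a \<Rightarrow> 'a stream measure) \<Rightarrow> bool" where
  "markov_law K Px \<longleftrightarrow>
     K \<in> borel \<rightarrow>\<^sub>M prob_algebra borel \<and>
     Px \<in> borel \<rightarrow>\<^sub>M prob_algebra (stream_space borel) \<and>
     (\<forall>x. Px x = K x \<bind> (\<lambda>y. distr (Px y) (stream_space borel) (\<lambda>\<omega>. x ## \<omega>)))"

definition nat_filtration :: "nat \<Rightarrow> 'a::polish_space stream measure" where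
  "nat_filtration n = vimage_algebra (space (stream_space (borel :: 'a measure)))
      (\<lambda>\<omega>. restrict (\<lambda>i. \<omega> !! i) {..n}) (PiM {..n} (\<lambda>_. borel))"

definition nat_stopping_time :: "('a::polish_space stream \<Rightarrow> enat) \<Rightarrow> bool" where
  "nat_stopping_time \<tau> \<longleftrightarrow> (\<forall>n::nat. Measurable.pred (nat_filtration n) (\<lambda>\<omega>. \<tau> \<omega> \<le> enat n))"

definition theta_compatible ::
  "('a::polish_space \<Rightarrow> 'a stream measure) \<Rightarrow> ('a stream \<Rightarrow> enat) \<Rightarrow> bool" where
  "theta_compatible Px \<tau> \<longleftrightarrow>
     (\<forall>x. emeasure (Px x) {\<omega> \<in> space (Px x). \<tau> \<omega> = 0} = 0 \<and>
          (AE \<omega> in Px x. \<tau> \<omega> \<ge> 2 \<longrightarrow> \<tau> (stl \<omega>) = \<tau> \<omega> - 1))"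

definition Etau :: "('a \<Rightarrow> 'a stream measure) \<Rightarrow> ('a stream \<Rightarrow> enat) \<Rightarrow> 'a \<Rightarrow> ennreal" where
  "Etau Px \<tau> x = (\<integral>\<^sup>+ \<omega>. (case \<tau> \<omega> of enat n \<Rightarrow> of_nat n | \<infinity> \<Rightarrow> \<infinity>) \<partial>Px x)"

definition Qop :: "('a \<Rightarrow> 'a stream measure) \<Rightarrow> ('a stream \<Rightarrow> enat) \<Rightarrow> ('a \<Rightarrow> real) \<Rightarrow> 'a \<Rightarrow> ennreal" where
  "Qop Px \<tau> f x = (\<integral>\<^sup>+ \<omega>. (case \<tau> \<omega> of enat n \<Rightarrow> ennreal (f (\<omega> !! n)) | \<infinity> \<Rightarrow> 0) \<partial>Px x)"

definition Pop :: "('a \<Rightarrow> 'a measure) \<Rightarrow> ('a \<Rightarrow> real) \<Rightarrow> 'a \<Rightarrow> ennreal" where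
  "Pop K f x = (\<integral>\<^sup>+ y. ennreal (f y) \<partial>K x)"

definition Pu_real :: "('a \<Rightarrow> 'a measure) \<Rightarrow> ('a \<Rightarrow> real) \<Rightarrow> 'a \<Rightarrow> real" where
  "Pu_real K u x = enn2real (Pop K u x)"

definition B_u :: "('a \<Rightarrow> 'a measure) \<Rightarrow> ('a \<Rightarrow> real) \<Rightarrow> real" where
  "B_u K u = (SUP x. Pu_real K u x - u x) + 1"

definition wfun :: "('a \<Rightarrow> 'a measure) \<Rightarrow> ('a \<Rightarrow> real) \<Rightarrow> 'a \<Rightarrow> real" where
  "wfun K u x = u x - Pu_real K u x + B_u K u"

definition drift_function ::
  "('a::polish_space \<Rightarrow> 'a measure) \<Rightarrow> ('a \<Rightarrow> 'a stream measure) \<Rightarrow> ('a stream \<Rightarrow> enat)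
   \<Rightarrow> ('a \<Rightarrow> real) \<Rightarrow> bool" where
  "drift_function K Px \<tau> u \<longleftrightarrow>
     u \<in> borel_measurable borel \<and> (\<forall>x. 1 \<le> u x) \<and>
     \<comment> \<open>\<open>u - P u\<close> bounded below (in particular \<open>P u\<close> finite)\<close>
     (\<exists>c. \<forall>x. Pop K u x \<le> ennreal (u x + c)) \<and>
     (\<exists>C. \<forall>x. Qop Px \<tau> u x \<le> ennreal C) \<and>
     (\<exists>C. \<forall>x. Etau Px \<tau> x / ennreal (u x) \<le> ennreal C) \<and>
     (\<exists>C. \<forall>x. Pop K (wfun K u) x / ennreal (wfun K u x) \<le> ennreal C)"

definition Fp :: "real \<Rightarrow> ('a::polish_space \<Rightarrow> real) \<Rightarrow> ('a \<Rightarrow> real) set" where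
  "Fp p v = {f. f \<in> borel_measurable borel \<and> (\<exists>C. \<forall>x. \<bar>f x\<bar> powr p / v x \<le> C)}"

definition Fp_norm :: "real \<Rightarrow> ('a \<Rightarrow> real) \<Rightarrow> ('a \<Rightarrow> real) \<Rightarrow> real" where
  "Fp_norm p v f = (SUP x. \<bar>f x\<bar> / v x powr (1 / p))"

definition Ep :: "('a::polish_space \<Rightarrow> 'a measure) \<Rightarrow> real \<Rightarrow> ('a \<Rightarrow> real) \<Rightarrow> ('a \<Rightarrow> real) set" where
  "Ep K p u = Fp p (wfun K u)"

definition Ep_norm :: "('a \<Rightarrow> 'a measure) \<Rightarrow> real \<Rightarrow> ('a \<Rightarrow> real) \<Rightarrow> ('a \<Rightarrow> real) \<Rightarrow> real" where
  "Ep_norm K p u f = Fp_norm p (wfun K u) f"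

definition Lp_space :: "'a measure \<Rightarrow> real \<Rightarrow> ('a \<Rightarrow> real) set" where
  "Lp_space M p = {f. f \<in> borel_measurable M \<and> integrable M (\<lambda>x. \<bar>f x\<bar> powr p)}"

definition Lp_norm :: "'a measure \<Rightarrow> real \<Rightarrow> ('a \<Rightarrow> real) \<Rightarrow> real" where
  "Lp_norm M p f = (\<integral>x. \<bar>f x\<bar> powr p \<partial>M) powr (1 / p)"

definition P_invariant :: "('a::polish_space \<Rightarrow> 'a measure) \<Rightarrow> 'a measure \<Rightarrow> bool" where
  "P_invariant K \<mu> \<longleftrightarrow>
     (\<forall>f \<in> borel_measurable (borel :: 'a measure).
        (\<integral>\<^sup>+ x. (\<integral>\<^sup>+ y. f y \<partial>K x) \<partial>\<mu>) = (\<integral>\<^sup>+ x. f x \<partial>\<mu>))"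

end

theory Submission
  imports Defs
begin

text \<open>
  Put \<open>w = u - P u + B\<^sub>u \<ge> 1\<close> and let \<open>c \<ge> 0\<close> bound \<open>P u - u\<close>. Invariance of \<open>\<mu>\<close> formally gives
  \<open>\<integral> (u - P u + c) d\<mu> = c \<mu>(X)\<close>; as \<open>\<integral> u d\<mu>\<close> may be infinite, one applies invariance to the
  truncations \<open>min u N\<close> instead and obtains the inequality \<open>\<le>\<close> by monotone convergence.
  Hence \<open>w \<le> u - P u + c + 1\<close> is \<open>\<mu>\<close>-integrable, and \<open>|f| \<le> \<parallel>f\<parallel> w\<^sup>1\<^sup>/\<^sup>p\<close> yields
  \<open>\<parallel>f\<parallel>\<^sub>L\<^sub>p \<le> \<parallel>f\<parallel> (\<integral> w d\<mu>)\<^sup>1\<^sup>/\<^sup>p\<close>.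
\<close>

lemma Pop_eq_ennreal_Pu_real:
  assumes "Pop K u x \<noteq> \<top>"
  shows "Pop K u x = ennreal (Pu_real K u x)"
  using assms unfolding Pu_real_def by (cases "Pop K u x") auto

lemma Pu_real_le:
  assumes "Pop K u x \<le> ennreal r" and "0 \<le> r"
  shows "Pu_real K u x \<le> r"
  using enn2real_mono[OF assms(1)] assms(2) by (simp add: Pu_real_def)

lemma Pu_real_measurable[measurable]:
  assumes K: "K \<in> borel \<rightarrow>\<^sub>M prob_algebra borel" and [measurable]: "u \<in> borel_measurable borel"
  shows "Pu_real K u \<in> borel_measurable borel"
proof -
  have [measurable]: "K \<in> borel \<rightarrow>\<^sub>M subprob_algebra borel"
    using measurable_prob_algebraD[OF K] .
  show ?thesis
    unfolding Pu_real_def Pop_def by measurable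
qed

lemma truncated_drift_defect_le:
  assumes K: "prob_space (K x)"
    and u0: "\<And>y. 0 \<le> u y" and c0: "0 \<le> c" and drift: "Pop K u x \<le> ennreal (u x + c)"
  shows "ennreal (u x - Pu_real K u x + c) * indicator {y. u y \<le> real N} x
           + (\<integral>\<^sup>+ y. ennreal (min (u y) (real N)) \<partial>K x)
         \<le> ennreal (min (u x) (real N)) + ennreal c"
proof (cases "u x \<le> real N")
  case True
  have Pu: "Pop K u x = ennreal (Pu_real K u x)"
    using drift by (intro Pop_eq_ennreal_Pu_real) (auto simp: top_unique)
  have Pu_le: "Pu_real K u x \<le> u x + c"
    using Pu_real_le[OF drift] u0[of x] c0 by simp
  have "(\<integral>\<^sup>+ y. ennreal (min (u y) (real N)) \<partial>K x) \<le> Pop K u x"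
    unfolding Pop_def by (rule nn_integral_mono) (auto intro!: ennreal_leI)
  then have "ennreal (u x - Pu_real K u x + c) * indicator {y. u y \<le> real N} x
      + (\<integral>\<^sup>+ y. ennreal (min (u y) (real N)) \<partial>K x)
      \<le> ennreal (u x - Pu_real K u x + c) + ennreal (Pu_real K u x)"
    using True by (simp add: Pu add_left_mono)
  also have "\<dots> = ennreal (u x + c)"
    using Pu_le by (subst ennreal_plus[symmetric]) (auto simp: Pu_real_def)
  finally show ?thesis
    using True u0[of x] c0 by simp
next
  case False
  have "(\<integral>\<^sup>+ y. ennreal (min (u y) (real N)) \<partial>K x) \<le> (\<integral>\<^sup>+ y. ennreal (real N) \<partial>K x)"
    by (rule nn_integral_mono) auto
  also have "\<dots> = ennreal (real N)"
    by (simp add: prob_space.emeasure_space_1[OF K])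
  finally show ?thesis
    using False by (simp add: add_increasing2)
qed

lemma nn_integral_drift_defect_le:
  fixes K :: "'a::polish_space \<Rightarrow> 'a measure"
  assumes K: "K \<in> borel \<rightarrow>\<^sub>M prob_algebra borel"
    and u[measurable]: "u \<in> borel_measurable borel" and u0: "\<And>x. 0 \<le> u x"
    and c0: "0 \<le> c" and drift: "\<And>x. Pop K u x \<le> ennreal (u x + c)"
    and sets_\<mu>: "sets \<mu> = sets borel" and finite_\<mu>: "finite_measure \<mu>"
    and invariant: "P_invariant K \<mu>"
  shows "(\<integral>\<^sup>+ x. ennreal (u x - Pu_real K u x + c) \<partial>\<mu>) \<le> ennreal c * emeasure \<mu> (space \<mu>)"
proof -
  have [measurable]: "K \<in> borel \<rightarrow>\<^sub>M subprob_algebra borel"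
    using measurable_prob_algebraD[OF K] .
  have K_prob: "prob_space (K x)" for x
    using measurable_space[OF K, of x] by (simp add: space_prob_algebra)
  have meas_\<mu>: "borel_measurable \<mu> = borel_measurable borel"
    by (rule measurable_cong_sets[OF sets_\<mu> refl])
  define d where "d x = ennreal (u x - Pu_real K u x + c)" for x
  define t where "t N y = ennreal (min (u y) (real N))" for N :: nat and y
  have [measurable]: "d \<in> borel_measurable borel"
    unfolding d_def using Pu_real_measurable[OF K u] by measurable
  have [measurable]: "t N \<in> borel_measurable borel" for N
    unfolding t_def by measurable
  have truncated: "(\<integral>\<^sup>+ x. d x * indicator {y. u y \<le> real N} x \<partial>\<mu>) \<le> ennreal c * emeasure \<mu> (space \<mu>)"
    for N
  proof -
    have "(\<integral>\<^sup>+ x. t N x \<partial>\<mu>) \<le> (\<integral>\<^sup>+ x. ennreal (real N) \<partial>\<mu>)"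
      unfolding t_def by (rule nn_integral_mono) auto
    also have "\<dots> < \<infinity>"
      using finite_measure.emeasure_finite[OF finite_\<mu>, of "space \<mu>"]
      by (simp add: ennreal_mult_less_top top.not_eq_extremum)
    finally have t_finite: "(\<integral>\<^sup>+ x. t N x \<partial>\<mu>) \<noteq> \<infinity>" by simp
    have "(\<integral>\<^sup>+ x. t N x \<partial>\<mu>) + (\<integral>\<^sup>+ x. d x * indicator {y. u y \<le> real N} x \<partial>\<mu>)
        = (\<integral>\<^sup>+ x. d x * indicator {y. u y \<le> real N} x + (\<integral>\<^sup>+ y. t N y \<partial>K x) \<partial>\<mu>)"
      using invariant[unfolded P_invariant_def, rule_format, of "t N"]
      by (subst nn_integral_add) (auto simp: meas_\<mu> add.commute)
    also have "\<dots> \<le> (\<integral>\<^sup>+ x. t N x + ennreal c \<partial>\<mu>)"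
      unfolding d_def t_def
      by (intro nn_integral_mono truncated_drift_defect_le K_prob u0 c0 drift)
    also have "\<dots> = (\<integral>\<^sup>+ x. t N x \<partial>\<mu>) + ennreal c * emeasure \<mu> (space \<mu>)"
      by (subst nn_integral_add) (auto simp: meas_\<mu>)
    finally show ?thesis
      using t_finite by (simp add: ennreal_add_left_cancel_le)
  qed
  have "(\<integral>\<^sup>+ x. d x \<partial>\<mu>) = (\<integral>\<^sup>+ x. (SUP N. d x * indicator {y. u y \<le> real N} x) \<partial>\<mu>)"
  proof (rule nn_integral_cong)
    fix x
    obtain N :: nat where "u x \<le> real N"
      using real_arch_simple by blast
    then show "d x = (SUP N. d x * indicator {y. u y \<le> real N} x)"
      by (intro antisym SUP_upper2[of N] SUP_least) (auto simp: indicator_def)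
  qed
  also have "\<dots> = (SUP N. \<integral>\<^sup>+ x. d x * indicator {y. u y \<le> real N} x \<partial>\<mu>)"
    by (rule nn_integral_monotone_convergence_SUP)
      (auto simp: incseq_def le_fun_def indicator_def meas_\<mu>)
  also have "\<dots> \<le> ennreal c * emeasure \<mu> (space \<mu>)"
    by (rule SUP_least) (rule truncated)
  finally show ?thesis
    unfolding d_def .
qed

lemma wfun_bounds:
  assumes u0: "\<And>x. 0 \<le> u x" and c0: "0 \<le> c" and drift: "\<And>x. Pop K u x \<le> ennreal (u x + c)"
  shows "1 \<le> wfun K u x" and "wfun K u x \<le> u x - Pu_real K u x + c + 1"
proof -
  have Pu_le: "Pu_real K u y - u y \<le> c" for y
    using Pu_real_le[OF drift[of y]] u0[of y] c0 by simp
  then have "bdd_above (range (\<lambda>y. Pu_real K u y - u y))"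
    by (intro bdd_aboveI2)
  then show "1 \<le> wfun K u x"
    using cSUP_upper[of x UNIV "\<lambda>y. Pu_real K u y - u y"] by (simp add: wfun_def B_u_def)
  show "wfun K u x \<le> u x - Pu_real K u x + c + 1"
    using cSUP_least[of UNIV "\<lambda>y. Pu_real K u y - u y" c] Pu_le by (simp add: wfun_def B_u_def)
qed

lemma wfun_measurable[measurable]:
  assumes K: "K \<in> borel \<rightarrow>\<^sub>M prob_algebra borel" and [measurable]: "u \<in> borel_measurable borel"
  shows "wfun K u \<in> borel_measurable borel"
  unfolding wfun_def using Pu_real_measurable[OF assms] by measurable

lemma integrable_wfun:
  fixes K :: "'a::polish_space \<Rightarrow> 'a measure"
  assumes K: "K \<in> borel \<rightarrow>\<^sub>M prob_algebra borel"
    and u[measurable]: "u \<in> borel_measurable borel" and u0: "\<And>x. 0 \<le> u x"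
    and c0: "0 \<le> c" and drift: "\<And>x. Pop K u x \<le> ennreal (u x + c)"
    and sets_\<mu>: "sets \<mu> = sets borel" and finite_\<mu>: "finite_measure \<mu>"
    and invariant: "P_invariant K \<mu>"
  shows "integrable \<mu> (wfun K u)"
proof (rule integrableI_bounded)
  have meas_\<mu>: "borel_measurable \<mu> = borel_measurable borel"
    by (rule measurable_cong_sets[OF sets_\<mu> refl])
  show "wfun K u \<in> borel_measurable \<mu>"
    using wfun_measurable[OF K u] by (simp add: meas_\<mu>)
  have "(\<integral>\<^sup>+ x. ennreal (norm (wfun K u x)) \<partial>\<mu>)
      \<le> (\<integral>\<^sup>+ x. ennreal (u x - Pu_real K u x + c) + 1 \<partial>\<mu>)"
  proof (rule nn_integral_mono)
    fix x
    have "ennreal (norm (wfun K u x)) \<le> ennreal (u x - Pu_real K u x + c + 1)"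
      using wfun_bounds[OF u0 c0 drift, of x] by (intro ennreal_leI) simp
    also have "\<dots> = ennreal (u x - Pu_real K u x + c) + 1"
      using wfun_bounds[OF u0 c0 drift, of x] by (subst ennreal_plus) auto
    finally show "ennreal (norm (wfun K u x)) \<le> ennreal (u x - Pu_real K u x + c) + 1" .
  qed
  also have "\<dots> = (\<integral>\<^sup>+ x. ennreal (u x - Pu_real K u x + c) \<partial>\<mu>) + emeasure \<mu> (space \<mu>)"
    using Pu_real_measurable[OF K u] by (subst nn_integral_add) (auto simp: meas_\<mu>)
  also have "\<dots> \<le> ennreal c * emeasure \<mu> (space \<mu>) + emeasure \<mu> (space \<mu>)"
    by (intro add_right_mono nn_integral_drift_defect_le assms)
  also have "\<dots> < \<infinity>"
    using finite_measure.emeasure_finite[OF finite_\<mu>, of "space \<mu>"]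
    by (simp add: ennreal_mult_less_top ennreal_add_less_top top.not_eq_extremum)
  finally show "(\<integral>\<^sup>+ x. ennreal (norm (wfun K u x)) \<partial>\<mu>) < \<infinity>" .
qed

lemma Fp_abs_le_root:
  assumes "f \<in> Fp p v" and v: "\<And>x. 0 < v x" and p: "0 < p"
  obtains D where "0 \<le> D" and "\<And>x. \<bar>f x\<bar> \<le> D * v x powr (1 / p)"
proof -
  obtain C where C: "\<And>x. \<bar>f x\<bar> powr p / v x \<le> C"
    using assms(1) by (auto simp: Fp_def)
  have C0: "0 \<le> C"
    by (meson C divide_nonneg_pos order_trans powr_ge_zero v)
  have "\<bar>f x\<bar> \<le> C powr (1 / p) * v x powr (1 / p)" for x
  proof -
    have "\<bar>f x\<bar> = (\<bar>f x\<bar> powr p) powr (1 / p)"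
      using p by (simp add: powr_powr)
    also have "\<dots> \<le> (C * v x) powr (1 / p)"
      using C[of x] v[of x] p by (intro powr_mono2) (auto simp: divide_le_eq)
    also have "\<dots> = C powr (1 / p) * v x powr (1 / p)"
      using C0 v[of x] by (simp add: powr_mult)
    finally show ?thesis .
  qed
  then show ?thesis
    using that[of "C powr (1 / p)"] by simp
qed

lemma Fp_diff:
  assumes f: "f \<in> Fp p v" and g: "g \<in> Fp p v" and v: "\<And>x. 0 < v x" and p: "0 < p"
  shows "(\<lambda>x. f x - g x) \<in> Fp p v"
proof -
  obtain D E where "0 \<le> D" "\<And>x. \<bar>f x\<bar> \<le> D * v x powr (1 / p)"
    and "0 \<le> E" "\<And>x. \<bar>g x\<bar> \<le> E * v x powr (1 / p)"
    using Fp_abs_le_root[OF f v p] Fp_abs_le_root[OF g v p] by metis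
  then have diff: "\<bar>f x - g x\<bar> \<le> (D + E) * v x powr (1 / p)" for x
    by (smt (verit, best) distrib_right)
  have "\<bar>f x - g x\<bar> powr p / v x \<le> (D + E) powr p" for x
  proof -
    have "\<bar>f x - g x\<bar> powr p \<le> ((D + E) * v x powr (1 / p)) powr p"
      using diff p by (intro powr_mono2) auto
    also have "\<dots> = (D + E) powr p * v x"
      using \<open>0 \<le> D\<close> \<open>0 \<le> E\<close> v[of x] p by (simp add: powr_mult powr_powr)
    finally show ?thesis
      using v[of x] by (simp add: divide_le_eq)
  qed
  then show ?thesis
    using f g by (auto simp: Fp_def)
qed

lemma abs_div_le_Fp_norm:
  assumes "f \<in> Fp p v" and v: "\<And>x. 0 < v x" and p: "0 < p"
  shows "\<bar>f x\<bar> / v x powr (1 / p) \<le> Fp_norm p v f"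
proof -
  obtain D where "\<And>x. \<bar>f x\<bar> \<le> D * v x powr (1 / p)"
    using Fp_abs_le_root[OF assms] by blast
  then have "bdd_above (range (\<lambda>x. \<bar>f x\<bar> / v x powr (1 / p)))"
    using v by (intro bdd_aboveI2[of _ _ D]) (simp add: divide_le_eq less_imp_neq[symmetric])
  then show ?thesis
    unfolding Fp_norm_def by (rule cSUP_upper[OF UNIV_I])
qed

lemma Fp_norm_nonneg:
  assumes "f \<in> Fp p v" and "\<And>x. 0 < v x" and "0 < p"
  shows "0 \<le> Fp_norm p v f"
  using abs_div_le_Fp_norm[OF assms, of undefined]
  by (meson divide_nonneg_nonneg abs_ge_zero order_trans powr_ge_zero)

lemma abs_powr_le_Fp_norm:
  assumes "f \<in> Fp p v" and v: "\<And>x. 0 < v x" and p: "0 < p"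
  shows "\<bar>f x\<bar> powr p \<le> Fp_norm p v f powr p * v x"
proof -
  have "\<bar>f x\<bar> \<le> Fp_norm p v f * v x powr (1 / p)"
    using abs_div_le_Fp_norm[OF assms, of x] v[of x] by (simp add: divide_le_eq)
  then have "\<bar>f x\<bar> powr p \<le> (Fp_norm p v f * v x powr (1 / p)) powr p"
    using p by (intro powr_mono2) auto
  also have "\<dots> = Fp_norm p v f powr p * v x"
    using Fp_norm_nonneg[OF assms] v[of x] p by (simp add: powr_mult powr_powr)
  finally show ?thesis .
qed

lemma integrable_abs_powr_Fp:
  assumes f: "f \<in> Fp p v" and v: "\<And>x. 0 < v x" and p: "0 < p"
    and sets_\<mu>: "sets \<mu> = sets borel" and v_int: "integrable \<mu> v"
  shows "integrable \<mu> (\<lambda>x. \<bar>f x\<bar> powr p)"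
proof (rule Bochner_Integration.integrable_bound)
  show "integrable \<mu> (\<lambda>x. Fp_norm p v f powr p * v x)"
    using v_int by simp
  have "f \<in> borel_measurable borel"
    using f by (simp add: Fp_def)
  then show "(\<lambda>x. \<bar>f x\<bar> powr p) \<in> borel_measurable \<mu>"
    by (simp add: measurable_cong_sets[OF sets_\<mu> refl])
  show "AE x in \<mu>. norm (\<bar>f x\<bar> powr p) \<le> norm (Fp_norm p v f powr p * v x)"
    using abs_powr_le_Fp_norm[OF f v p] by (simp add: abs_mult abs_of_pos[OF v])
qed

lemma Fp_subset_Lp_space:
  assumes v: "\<And>x. 0 < v x" and p: "0 < p"
    and sets_\<mu>: "sets \<mu> = sets borel" and v_int: "integrable \<mu> v"
  shows "Fp p v \<subseteq> Lp_space \<mu> p"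
  using integrable_abs_powr_Fp[OF _ assms]
  by (auto simp: Lp_space_def Fp_def measurable_cong_sets[OF sets_\<mu> refl])

lemma Lp_norm_le_Fp_norm:
  assumes f: "f \<in> Fp p v" and v: "\<And>x. 0 < v x" and p: "0 < p"
    and sets_\<mu>: "sets \<mu> = sets borel" and v_int: "integrable \<mu> v"
  shows "Lp_norm \<mu> p f \<le> Fp_norm p v f * (\<integral>x. v x \<partial>\<mu>) powr (1 / p)"
proof -
  have "(\<integral>x. \<bar>f x\<bar> powr p \<partial>\<mu>) \<le> (\<integral>x. Fp_norm p v f powr p * v x \<partial>\<mu>)"
    using integrable_abs_powr_Fp[OF assms] v_int abs_powr_le_Fp_norm[OF f v p]
    by (intro integral_mono) auto
  also have "\<dots> = Fp_norm p v f powr p * (\<integral>x. v x \<partial>\<mu>)"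
    by simp
  finally have "Lp_norm \<mu> p f \<le> (Fp_norm p v f powr p * (\<integral>x. v x \<partial>\<mu>)) powr (1 / p)"
    unfolding Lp_norm_def using p by (intro powr_mono2) auto
  also have "\<dots> = Fp_norm p v f * (\<integral>x. v x \<partial>\<mu>) powr (1 / p)"
    using Fp_norm_nonneg[OF f v p] p integral_nonneg_AE[of v \<mu>] v
    by (simp add: powr_mult powr_powr less_imp_le)
  finally show ?thesis .
qed

lemma Lp_norm_diff_tendsto_zero:
  assumes fs: "\<And>n. fs n \<in> Fp p v" and f: "f \<in> Fp p v"
    and v: "\<And>x. 0 < v x" and p: "0 < p"
    and sets_\<mu>: "sets \<mu> = sets borel" and v_int: "integrable \<mu> v"
    and lim: "(\<lambda>n. Fp_norm p v (\<lambda>x. fs n x - f x)) \<longlonglongrightarrow> 0"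
  shows "(\<lambda>n. Lp_norm \<mu> p (\<lambda>x. fs n x - f x)) \<longlonglongrightarrow> 0"
proof (rule tendsto_sandwich[OF _ _ tendsto_const])
  show "(\<lambda>n. Fp_norm p v (\<lambda>x. fs n x - f x) * (\<integral>x. v x \<partial>\<mu>) powr (1 / p)) \<longlonglongrightarrow> 0"
    using tendsto_mult_left_zero[OF lim] .
  show "\<forall>\<^sub>F n in sequentially. 0 \<le> Lp_norm \<mu> p (\<lambda>x. fs n x - f x)"
    by (simp add: Lp_norm_def)
  show "\<forall>\<^sub>F n in sequentially. Lp_norm \<mu> p (\<lambda>x. fs n x - f x)
      \<le> Fp_norm p v (\<lambda>x. fs n x - f x) * (\<integral>x. v x \<partial>\<mu>) powr (1 / p)"
    using Lp_norm_le_Fp_norm[OF Fp_diff[OF fs f v p] v p sets_\<mu> v_int] by simp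
qed

theorem mainTheorem14:
  fixes K :: "'a::polish_space \<Rightarrow> 'a measure"
    and Px :: "'a \<Rightarrow> 'a stream measure"
    and \<tau> :: "'a stream \<Rightarrow> enat"
    and u :: "'a \<Rightarrow> real"
    and p :: real
    and \<mu> :: "'a measure"
  assumes "markov_law K Px"
    and "nat_stopping_time \<tau>"
    and "theta_compatible Px \<tau>"
    and "\<forall>x. Etau Px \<tau> x < \<infinity>"
    and "drift_function K Px \<tau> u"
    and "1 \<le> p"
    and "sets \<mu> = sets borel"
    and "finite_measure \<mu>"
    and "emeasure \<mu> (space \<mu>) \<noteq> 0"
    and "P_invariant K \<mu>"
  shows "Ep K p u \<subseteq> Lp_space \<mu> p \<and>
    (\<forall>fs f. (\<forall>n. fs n \<in> Ep K p u) \<longrightarrow> f \<in> Ep K p u \<longrightarrow>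
        (\<lambda>n. Ep_norm K p u (\<lambda>x. fs n x - f x)) \<longlonglongrightarrow> 0 \<longrightarrow>
        (\<lambda>n. Lp_norm \<mu> p (\<lambda>x. fs n x - f x)) \<longlonglongrightarrow> 0)"
proof -
  have K: "K \<in> borel \<rightarrow>\<^sub>M prob_algebra borel"
    using assms(1) by (simp add: markov_law_def)
  obtain c where u: "u \<in> borel_measurable borel" "\<And>x. 1 \<le> u x"
    and drift: "\<And>x. Pop K u x \<le> ennreal (u x + c)"
    using assms(5) by (auto simp: drift_function_def)
  have drift_c0: "Pop K u x \<le> ennreal (u x + max c 0)" for x
    using drift[of x] by (rule order_trans) (simp add: ennreal_leI)
  have u0: "0 \<le> u x" for x
    using u(2)[of x] by linarith
  define w where "w = wfun K u"
  have w_pos: "0 < w x" for x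
    using wfun_bounds(1)[OF u0 _ drift_c0, of x] by (simp add: w_def)
  have w_int: "integrable \<mu> w"
    unfolding w_def using integrable_wfun[OF K u(1) u0 _ drift_c0] assms(7,8,10) by simp
  have p: "0 < p"
    using assms(6) by simp
  show ?thesis
    using Fp_subset_Lp_space[OF w_pos p assms(7) w_int]
      Lp_norm_diff_tendsto_zero[OF _ _ w_pos p assms(7) w_int]
    by (simp add: Ep_def Ep_norm_def w_def)
qed

end
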